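(* The size $\gamma$ of the smallest string attractor satisfies the following lower bounds on its sensitivity (the alphabet being allowed to contain as many distinct characters as needed): substitutions: $\liminf_{n\to\infty}\mathsf{MS}_{\mathrm{sub}}(\gamma,n) \geq 2$, $\mathsf{AS}_{\mathrm{sub}}(\gamma,n) \geq \gamma-2$ and $\mathsf{AS}_{\mathrm{sub}}(\gamma,n)=\Omega(\sqrt{n})$; insertions: $\liminf_{n\to\infty}\mathsf{MS}_{\mathrm{ins}}(\gamma,n) \geq 2$, $\mathsf{AS}_{\mathrm{ins}}(\gamma,n) \geq \gamma-2$ and $\mathsf{AS}_{\mathrm{ins}}(\gamma,n)=\Omega(\sqrt{n})$; deletions: $\liminf_{n\to\infty}\mathsf{MS}_{\mathrm{del}}(\gamma,n) \geq 2$, $\mathsf{AS}_{\mathrm{del}}(\gamma,n) \geq \gamma-3$ and $\mathsf{AS}_{\mathrm{del}}(\gamma,n)=\Omega(\sqrt{n})$.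
   Context: Strings are finite sequences over an alphabet $\Sigma$; $\Sigma^n$ is the set of strings of length $n$; $\mathsf{ed}$ is the edit distance (single-character substitutions, insertions, deletions). For a measure $C$ on strings: $\mathsf{MS}_{\mathrm{sub}}(C,n)=\max_{T\in\Sigma^n}\{C(T')/C(T): T'\in\Sigma^n,\ \mathsf{ed}(T,T')=1\}$; $\mathsf{MS}_{\mathrm{ins}}$, $\mathsf{MS}_{\mathrm{del}}$ the same with $T'\in\Sigma^{n+1}$, resp. $\Sigma^{n-1}$; $\mathsf{AS}_{\ast}$ the same with $C(T')-C(T)$. A bound of the form "$\mathsf{AS}(\gamma,n)\ge \gamma-c$" means that there are strings $T$ (with $\gamma(T)$ arbitrarily large) and $T'$ with $\mathsf{ed}(T,T')=1$ of the relevant type such that $\gamma(T')-\gamma(T)\ge\gamma(T)-c$. A string attractor of $T$ is a set $\Gamma$ of positions of $T$ such that every substring of $T$ has an occurrence $T[i..j]$ with $\Gamma\cap[i,j]\neq\emptyset$; $\gamma(T)$ is the minimum size of a string attractor of $T$. *)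

theory Defs
  imports Complex_Main "HOL-Library.Extended_Real"
begin

fun ed :: "'a list \<Rightarrow> 'a list \<Rightarrow> nat" where
  "ed [] ys = length ys"
| "ed xs [] = length xs"
| "ed (x # xs) (y # ys) =
     min (min (ed xs (y # ys) + 1) (ed (x # xs) ys + 1))
         (ed xs ys + (if x = y then 0 else 1))"

definition is_string_attractor :: "'a list \<Rightarrow> nat set \<Rightarrow> bool" where
  "is_string_attractor T \<Gamma> \<longleftrightarrow>
     \<Gamma> \<subseteq> {..<length T} \<and>
     (\<forall>i j. i \<le> j \<and> j < length T \<longrightarrow>
        (\<exists>i'. i' + (j - i) < length T \<and>
              take (j - i + 1) (drop i' T) = take (j - i + 1) (drop i T) \<and>
              (\<exists>p\<in>\<Gamma>. i' \<le> p \<and> p \<le> i' + (j - i))))"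

definition gamma :: "'a list \<Rightarrow> nat" where
  "gamma T = (LEAST k. \<exists>\<Gamma>. is_string_attractor T \<Gamma> \<and> card \<Gamma> = k)"

text \<open>Sensitivity of a measure C on strings (maximum taken as supremum).\<close>

definition MS_sub :: "('a list \<Rightarrow> nat) \<Rightarrow> nat \<Rightarrow> real" where
  "MS_sub C n = Sup {real (C T') / real (C T) | T T'.
      length T = n \<and> length T' = n \<and> ed T T' = 1}"

definition MS_ins :: "('a list \<Rightarrow> nat) \<Rightarrow> nat \<Rightarrow> real" where
  "MS_ins C n = Sup {real (C T') / real (C T) | T T'.
      length T = n \<and> length T' = n + 1 \<and> ed T T' = 1}"

definition MS_del :: "('a list \<Rightarrow> nat) \<Rightarrow> nat \<Rightarrow> real" where
  "MS_del C n = Sup {real (C T') / real (C T) | T T'.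
      length T = n \<and> length T' + 1 = n \<and> ed T T' = 1}"

definition AS_sub :: "('a list \<Rightarrow> nat) \<Rightarrow> nat \<Rightarrow> real" where
  "AS_sub C n = Sup {real (C T') - real (C T) | T T'.
      length T = n \<and> length T' = n \<and> ed T T' = 1}"

definition AS_ins :: "('a list \<Rightarrow> nat) \<Rightarrow> nat \<Rightarrow> real" where
  "AS_ins C n = Sup {real (C T') - real (C T) | T T'.
      length T = n \<and> length T' = n + 1 \<and> ed T T' = 1}"

definition AS_del :: "('a list \<Rightarrow> nat) \<Rightarrow> nat \<Rightarrow> real" where
  "AS_del C n = Sup {real (C T') - real (C T) | T T'.
      length T = n \<and> length T' + 1 = n \<and> ed T T' = 1}"

end

theory Submission
  imports Defs
begin

text \<open>
  For \<open>K \<ge> 2\<close> let \<open>T\<close> be \<open>0\<^sup>K 1 0\<^sup>K\<close>, followed by the \<open>K - 1\<close> blocks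
  \<open>(q + 4) 0\<^sup>q\<^sup>+\<^sup>1 1 0\<^sup>K\<^sup>-\<^sup>q\<^sup>-\<^sup>1\<close> and a tail \<open>3\<^sup>m\<close>. A factor of \<open>T\<close> avoiding the
  positions \<open>0\<close>, \<open>K\<close>, the block starts and the start of the tail is a run of \<open>3\<close>s, a run
  of at most \<open>K\<close> zeros, or a window \<open>0\<^sup>a 1 0\<^sup>b\<close> inside a block; the last two occur
  around position \<open>K\<close> or at \<open>0\<close>. So these positions form an attractor and
  \<open>\<gamma>(T) \<le> K + 2\<close>.

  Substituting \<open>2\<close> for the \<open>1\<close> of the prefix, inserting a \<open>2\<close> after it, or deleting it
  leaves no \<open>1\<close> followed by a zero outside the blocks. Then every block needs two attractor
  positions, its unique start letter and a position in \<open>0\<^sup>q\<^sup>+\<^sup>1 1 0\<^sup>K\<^sup>-\<^sup>q\<^sup>-\<^sup>1\<close>,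
  the tail needs one and the prefix one or two, so \<open>\<gamma>\<close> grows to about \<open>2K\<close>. Letting
  \<open>K \<rightarrow> \<infinity>\<close> gives the multiplicative bounds, \<open>m = 0\<close> the bounds \<open>\<gamma> - c\<close>, and
  \<open>K \<approx> \<surd>n\<close> the bounds \<open>\<Omega>(\<surd>n)\<close>.
\<close>

section \<open>Edit distance\<close>

lemma ed_self [simp]: "ed xs xs = 0"
  by (induction xs) auto

lemma ed_eq_0_iff: "ed xs ys = 0 \<longleftrightarrow> xs = ys"
proof
  show "ed xs ys = 0 \<Longrightarrow> xs = ys"
    by (induction xs ys rule: ed.induct) (auto split: if_splits)
qed simp

lemma ed_append_left_le: "ed (u @ xs) (u @ ys) \<le> ed xs ys"
  by (induction u) (auto simp: min_le_iff_disj)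

lemma ed_Cons_Cons_le_1: "ed (x # v) (y # v) \<le> 1"
  by (simp add: min_le_iff_disj)

lemma ed_Cons_right_le_1: "ed v (z # v) \<le> 1"
  by (cases v) (auto simp: min_le_iff_disj)

lemma ed_Cons_left_le_1: "ed (z # v) v \<le> 1"
  by (cases v) (auto simp: min_le_iff_disj)

lemma ed_eq_1I: "ed xs ys \<le> 1 \<Longrightarrow> xs \<noteq> ys \<Longrightarrow> ed xs ys = 1"
  using ed_eq_0_iff by (metis le_neq_implies_less less_one)

lemma map_upt_split: "k \<le> n \<Longrightarrow> map f [0..<n] = map f [0..<k] @ map f [k..<n]"
  by (metis le_add_diff_inverse map_append upt_add_eq_append zero_le)

lemma map_upt_split_Cons:
  "k < n \<Longrightarrow> map f [0..<n] = map f [0..<k] @ f k # map f [Suc k..<n]"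
  by (subst map_upt_split[of k n]) (simp_all add: upt_conv_Cons)

lemma ed_map_upt_substitution:
  assumes "k < n" and "\<And>x. x < n \<Longrightarrow> x \<noteq> k \<Longrightarrow> g x = f x" and "g k \<noteq> f k"
  shows "ed (map f [0..<n]) (map g [0..<n]) = 1"
proof (rule ed_eq_1I)
  have "map g [0..<k] = map f [0..<k]" "map g [Suc k..<n] = map f [Suc k..<n]"
    using assms(1,2) by auto
  then have "map g [0..<n] = map f [0..<k] @ g k # map f [Suc k..<n]"
    by (simp only: map_upt_split_Cons[OF assms(1)])
  then have "ed (map f [0..<n]) (map g [0..<n]) =
      ed (map f [0..<k] @ f k # map f [Suc k..<n]) (map f [0..<k] @ g k # map f [Suc k..<n])"
    by (simp only: map_upt_split_Cons[OF assms(1), of f])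
  also have "\<dots> \<le> 1"
    using ed_append_left_le ed_Cons_Cons_le_1 by (rule order_trans)
  finally show "ed (map f [0..<n]) (map g [0..<n]) \<le> 1" .
  show "map f [0..<n] \<noteq> map g [0..<n]"
  proof
    assume "map f [0..<n] = map g [0..<n]"
    then have "map f [0..<n] ! k = map g [0..<n] ! k" by (simp only:)
    with assms(1,3) show False by simp
  qed
qed

lemma ed_map_upt_insertion:
  assumes "k \<le> n" and "\<And>x. x < k \<Longrightarrow> g x = f x"
    and "\<And>x. k \<le> x \<Longrightarrow> x < n \<Longrightarrow> g (Suc x) = f x"
  shows "ed (map f [0..<n]) (map g [0..<Suc n]) = 1"
proof (rule ed_eq_1I)
  have "map g [Suc k..<Suc n] = map (g \<circ> Suc) [k..<n]"
    by (simp only: map_Suc_upt[symmetric] map_map)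
  also have "\<dots> = map f [k..<n]"
    using assms(3) by auto
  finally have "map g [0..<Suc n] = map f [0..<k] @ g k # map f [k..<n]"
    using map_upt_split_Cons[of k "Suc n" g] assms(1,2) by simp
  then have "ed (map f [0..<n]) (map g [0..<Suc n]) =
      ed (map f [0..<k] @ map f [k..<n]) (map f [0..<k] @ g k # map f [k..<n])"
    by (simp only: map_upt_split[OF assms(1), of f])
  also have "\<dots> \<le> 1"
    using ed_append_left_le ed_Cons_right_le_1 by (rule order_trans)
  finally show "ed (map f [0..<n]) (map g [0..<Suc n]) \<le> 1" .
  show "map f [0..<n] \<noteq> map g [0..<Suc n]"
    by (metis length_map length_upt diff_zero n_not_Suc_n)
qed

lemma ed_map_upt_deletion:
  assumes "k \<le> n" and "\<And>x. x < k \<Longrightarrow> g x = f x"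
    and "\<And>x. k \<le> x \<Longrightarrow> x < n \<Longrightarrow> g x = f (Suc x)"
  shows "ed (map f [0..<Suc n]) (map g [0..<n]) = 1"
proof (rule ed_eq_1I)
  have "map f [Suc k..<Suc n] = map (f \<circ> Suc) [k..<n]"
    by (simp only: map_Suc_upt[symmetric] map_map)
  also have "\<dots> = map g [k..<n]"
    using assms(3) by auto
  finally have "map f [0..<Suc n] = map g [0..<k] @ f k # map g [k..<n]"
    using map_upt_split_Cons[of k "Suc n" f] assms(1,2) by simp
  then have "ed (map f [0..<Suc n]) (map g [0..<n]) =
      ed (map g [0..<k] @ f k # map g [k..<n]) (map g [0..<k] @ map g [k..<n])"
    by (simp only: map_upt_split[OF assms(1), of g])
  also have "\<dots> \<le> 1"
    using ed_append_left_le ed_Cons_left_le_1 by (rule order_trans)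
  finally show "ed (map f [0..<Suc n]) (map g [0..<n]) \<le> 1" .
  show "map f [0..<Suc n] \<noteq> map g [0..<n]"
    by (metis length_map length_upt diff_zero n_not_Suc_n)
qed

section \<open>String attractors\<close>

lemma is_string_attractor_all_positions: "is_string_attractor T {..<length T}"
  unfolding is_string_attractor_def
proof (intro conjI allI impI)
  fix i j assume "i \<le> j \<and> j < length T"
  then show "\<exists>i'. i' + (j - i) < length T \<and> take (j - i + 1) (drop i' T) = take (j - i + 1) (drop i T) \<and>
      (\<exists>p\<in>{..<length T}. i' \<le> p \<and> p \<le> i' + (j - i))"
    by (intro exI[of _ i]) auto
qed simp

lemma is_string_attractor_finite: "is_string_attractor T G \<Longrightarrow> finite G"
  unfolding is_string_attractor_def using finite_subset by blast

lemma gamma_le_card: "is_string_attractor T G \<Longrightarrow> gamma T \<le> card G"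
  unfolding gamma_def by (rule Least_le) blast

lemma gamma_geI:
  assumes "\<And>G. is_string_attractor T G \<Longrightarrow> k \<le> card G"
  shows "k \<le> gamma T"
proof -
  have "\<exists>G. is_string_attractor T G \<and> card G = gamma T"
    unfolding gamma_def by (rule LeastI_ex) (use is_string_attractor_all_positions in blast)
  then show ?thesis using assms by metis
qed

lemma gamma_le_length: "gamma T \<le> length T"
  using gamma_le_card[OF is_string_attractor_all_positions] by simp

lemma take_drop_map_upt_eq_iff:
  assumes "i + L \<le> n" and "i' + L \<le> n"
  shows "take L (drop i' (map g [0..<n])) = take L (drop i (map g [0..<n])) \<longleftrightarrow>
    (\<forall>t<L. g (i' + t) = g (i + t))"
  using assms by (auto simp: list_eq_iff_nth_eq min_def)

definition has_marked_occurrence :: "(nat \<Rightarrow> 'a) \<Rightarrow> nat \<Rightarrow> nat set \<Rightarrow> nat \<Rightarrow> nat \<Rightarrow> bool" where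
  "has_marked_occurrence g n G i L \<longleftrightarrow>
     (\<exists>i'. i' + L \<le> n \<and> (\<forall>t<L. g (i' + t) = g (i + t)) \<and> (\<exists>p\<in>G. i' \<le> p \<and> p < i' + L))"

lemma has_marked_occurrenceI:
  assumes "i' + L \<le> n" and "\<And>t. t < L \<Longrightarrow> g (i' + t) = g (i + t)"
    and "p \<in> G" and "i' \<le> p" and "p < i' + L"
  shows "has_marked_occurrence g n G i L"
  unfolding has_marked_occurrence_def using assms by blast

lemma is_string_attractor_map_upt_iff:
  "is_string_attractor (map g [0..<n]) G \<longleftrightarrow>
     G \<subseteq> {..<n} \<and> (\<forall>i L. 0 < L \<and> i + L \<le> n \<longrightarrow> has_marked_occurrence g n G i L)"
  unfolding has_marked_occurrence_def
proof (intro iffI conjI allI impI; (elim conjE)?)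
  assume A: "is_string_attractor (map g [0..<n]) G"
  then show "G \<subseteq> {..<n}" by (simp add: is_string_attractor_def)
  fix i L assume "0 < L" "i + L \<le> n"
  then have "i \<le> i + L - 1 \<and> i + L - 1 < length (map g [0..<n])"
    and L: "i + L - 1 - i = L - 1" "L - 1 + 1 = L"
    by auto
  from A[unfolded is_string_attractor_def, THEN conjunct2, rule_format, OF this(1),
      unfolded L length_map length_upt diff_zero]
  obtain i' p where "i' + (L - 1) < n"
    and "take L (drop i' (map g [0..<n])) = take L (drop i (map g [0..<n]))"
    and "p \<in> G" "i' \<le> p" "p \<le> i' + (L - 1)"
    by blast
  with \<open>0 < L\<close> \<open>i + L \<le> n\<close> take_drop_map_upt_eq_iff[of i L n i' g]
  show "\<exists>i'. i' + L \<le> n \<and> (\<forall>t<L. g (i' + t) = g (i + t)) \<and> (\<exists>p\<in>G. i' \<le> p \<and> p < i' + L)"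
    by (intro exI[of _ i'] conjI bexI[of _ p]) auto
next
  assume G: "G \<subseteq> {..<n}" and occ: "\<forall>i L. 0 < L \<and> i + L \<le> n \<longrightarrow> (\<exists>i'. i' + L \<le> n \<and>
      (\<forall>t<L. g (i' + t) = g (i + t)) \<and> (\<exists>p\<in>G. i' \<le> p \<and> p < i' + L))"
  show "is_string_attractor (map g [0..<n]) G"
    unfolding is_string_attractor_def
  proof (intro conjI allI impI)
    show "G \<subseteq> {..<length (map g [0..<n])}" using G by simp
    fix i j assume ij: "i \<le> j \<and> j < length (map g [0..<n])"
    then have "0 < j - i + 1 \<and> i + (j - i + 1) \<le> n" by auto
    from occ[rule_format, OF this] obtain i' p where "i' + (j - i + 1) \<le> n"
      and "\<forall>t<j - i + 1. g (i' + t) = g (i + t)" "p \<in> G" "i' \<le> p" "p < i' + (j - i + 1)"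
      by blast
    with ij take_drop_map_upt_eq_iff[of i "j - i + 1" n i' g]
    show "\<exists>i'. i' + (j - i) < length (map g [0..<n]) \<and>
        take (j - i + 1) (drop i' (map g [0..<n])) = take (j - i + 1) (drop i (map g [0..<n])) \<and>
        (\<exists>p\<in>G. i' \<le> p \<and> p \<le> i' + (j - i))"
      by (intro exI[of _ i'] conjI bexI[of _ p]) auto
  qed
qed

lemma string_attractor_hits_occurrences:
  assumes "is_string_attractor (map g [0..<n]) G" and "0 < L" and "i + L \<le> n"
    and "\<And>i'. i' + L \<le> n \<Longrightarrow> \<forall>t<L. g (i' + t) = g (i + t) \<Longrightarrow> {i'..<i' + L} \<subseteq> H"
  shows "G \<inter> H \<noteq> {}"
proof -
  obtain i' p where "i' + L \<le> n" "\<forall>t<L. g (i' + t) = g (i + t)" "p \<in> G" "i' \<le> p" "p < i' + L"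
    using assms(1-3) unfolding is_string_attractor_map_upt_iff has_marked_occurrence_def by blast
  with assms(4) show ?thesis by fastforce
qed

lemma string_attractor_hits_letter:
  assumes "is_string_attractor (map g [0..<n]) G" and "x < n"
    and "\<And>y. y < n \<Longrightarrow> g y = g x \<Longrightarrow> y \<in> H"
  shows "G \<inter> H \<noteq> {}"
  by (rule string_attractor_hits_occurrences[OF assms(1), of 1 x]) (use assms in auto)

lemma string_attractor_contains_unique_letter:
  assumes "is_string_attractor (map g [0..<n]) G" and "x < n"
    and "\<And>y. y < n \<Longrightarrow> g y = g x \<Longrightarrow> y = x"
  shows "x \<in> G"
  using string_attractor_hits_letter[OF assms(1,2), of "{x}"] assms(3) by blast

section \<open>Block strings\<close>

text \<open>The string \<open>w\<close> on \<open>[0, B)\<close>, followed by \<open>K - 1\<close> blocks of length \<open>K + 2\<close>, block \<open>q\<close>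
  being \<open>(q + 4) 0\<^sup>q\<^sup>+\<^sup>1 1 0\<^sup>K\<^sup>-\<^sup>q\<^sup>-\<^sup>1\<close>, followed by \<open>3\<close>s. Prefixes use letters
  \<open>\<le> 2\<close>, so \<open>q + 4\<close> marks block \<open>q\<close> and \<open>3\<close> the tail.\<close>

definition block_seq :: "nat \<Rightarrow> nat \<Rightarrow> (nat \<Rightarrow> nat) \<Rightarrow> nat \<Rightarrow> nat" where
  "block_seq K B w x =
     (if x < B then w x
      else if x - B < (K - 1) * (K + 2) then
        (if (x - B) mod (K + 2) = 0 then (x - B) div (K + 2) + 4
         else if (x - B) mod (K + 2) = (x - B) div (K + 2) + 2 then 1 else 0)
      else 3)"

definition block_string :: "nat \<Rightarrow> nat \<Rightarrow> (nat \<Rightarrow> nat) \<Rightarrow> nat \<Rightarrow> nat list" where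
  "block_string K B w m = map (block_seq K B w) [0..<B + (K - 1) * (K + 2) + m]"

lemma length_block_string: "length (block_string K B w m) = B + (K - 1) * (K + 2) + m"
  by (simp add: block_string_def)

lemma block_seq_prefix: "x < B \<Longrightarrow> block_seq K B w x = w x"
  by (simp add: block_seq_def)

lemma block_seq_tail: "B + (K - 1) * (K + 2) \<le> x \<Longrightarrow> block_seq K B w x = 3"
  by (simp add: block_seq_def)

lemma block_seq_prefix_cong: "(x < B \<Longrightarrow> w x = w' x) \<Longrightarrow> block_seq K B w x = block_seq K B w' x"
  by (simp add: block_seq_def)

lemma block_seq_Suc_shift:
  assumes "B \<le> x"
  shows "block_seq K (Suc B) w (Suc x) = block_seq K B w' x"
proof -
  have "\<not> Suc x < Suc B" "\<not> x < B" "Suc x - Suc B = x - B"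
    using assms by simp_all
  then show ?thesis
    unfolding block_seq_def by (simp only: if_False)
qed

lemma block_position_less:
  fixes q :: nat
  assumes "q < K - 1" and "r < K + 2"
  shows "B + q * (K + 2) + r < B + (K - 1) * (K + 2)"
proof -
  have "q * (K + 2) + r < (q + 1) * (K + 2)" using assms(2) by simp
  also have "\<dots> \<le> (K - 1) * (K + 2)" using assms(1) by (intro mult_right_mono) auto
  finally show ?thesis by simp
qed

lemma block_seq_block:
  assumes "q < K - 1" and "r < K + 2"
  shows "block_seq K B w (B + q * (K + 2) + r) = (if r = 0 then q + 4 else if r = q + 2 then 1 else 0)"
proof -
  have divmod: "(q * M + r) div M = q" "(q * M + r) mod M = r" if "r < M" for M :: nat
    using that by auto
  have shift: "B + q * (K + 2) + r - B = q * (K + 2) + r"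
    by simp
  have "\<not> B + q * (K + 2) + r < B" and "q * (K + 2) + r < (K - 1) * (K + 2)"
    using block_position_less[OF assms, of 0] by simp_all
  then show ?thesis
    unfolding block_seq_def shift divmod[OF assms(2)] by (simp only: if_True if_False)
qed

lemma block_seq_block_letter:
  assumes "q < K - 1" and "r < K + 2" and "x = B + q * (K + 2) + r"
  shows "block_seq K B w x = (if r = 0 then q + 4 else if r = q + 2 then 1 else 0)"
  unfolding assms(3) using assms(1,2) by (rule block_seq_block)

lemma block_seq_position_cases:
  fixes x B K :: nat
  obtains "x < B"
  | "B + (K - 1) * (K + 2) \<le> x"
  | q r where "q < K - 1" "r < K + 2" "x = B + q * (K + 2) + r"
proof -
  consider "x < B" | "B + (K - 1) * (K + 2) \<le> x" | "B \<le> x" "x < B + (K - 1) * (K + 2)"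
    by linarith
  then show ?thesis
  proof cases
    case 3
    let ?d = "x - B"
    have "x = B + ?d div (K + 2) * (K + 2) + ?d mod (K + 2)"
      using 3 div_mult_mod_eq[of ?d "K + 2"] by linarith
    moreover have "?d div (K + 2) < K - 1"
      using 3 by (simp add: div_less_iff_less_mult)
    ultimately show ?thesis
      using that(3)[of "?d div (K + 2)" "?d mod (K + 2)"] by simp
  qed (use that in auto)
qed

lemma block_seq_next_block_start:
  assumes "q < K - 1"
  shows "3 \<le> block_seq K B w (B + q * (K + 2) + (K + 2))"
proof -
  have next_start: "B + q * (K + 2) + (K + 2) = B + (q + 1) * (K + 2) + 0"
    by simp
  show ?thesis
  proof (cases "q + 1 < K - 1")
    case True
    then show ?thesis
      unfolding next_start using block_seq_block[OF True, of 0 B w] by simp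
  next
    case False
    then have "(q + 1) * (K + 2) = (K - 1) * (K + 2)"
      using assms by (intro arg_cong[of _ _ "\<lambda>a. a * (K + 2)"]) linarith
    then show ?thesis
      unfolding next_start by (simp add: block_seq_tail)
  qed
qed

lemma block_seq_eq_block_startD:
  assumes "block_seq K B w x = q + 4" and "\<forall>y<B. w y \<le> 2"
  shows "x = B + q * (K + 2)"
proof (cases rule: block_seq_position_cases[where x = x and B = B and K = K])
  case 1
  with assms show ?thesis by (auto simp: block_seq_prefix)
next
  case 2
  with assms show ?thesis by (simp add: block_seq_tail)
next
  case (3 q' r)
  from assms(1) block_seq_block_letter[OF 3]
  have "(if r = 0 then q' + 4 else if r = q' + 2 then 1 else 0) = q + 4"
    by simp
  then have "r = 0" "q' = q"
    by (simp_all split: if_splits)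
  with 3(3) show ?thesis by simp
qed

lemma block_seq_eq_1D:
  assumes "block_seq K B w x = 1"
  shows "x < B \<and> w x = 1 \<or> (\<exists>q<K - 1. x = B + q * (K + 2) + (q + 2))"
proof (cases rule: block_seq_position_cases[where x = x and B = B and K = K])
  case 1
  with assms show ?thesis by (simp add: block_seq_prefix)
next
  case 2
  with assms show ?thesis by (simp add: block_seq_tail)
next
  case (3 q r)
  from assms(1) block_seq_block_letter[OF 3]
  have "(if r = 0 then q + 4 else if r = q + 2 then 1 else 0) = (1::nat)"
    by simp
  then have "r = q + 2"
    by (simp split: if_splits)
  with 3 show ?thesis by auto
qed

lemma block_seq_eq_2D:
  assumes "block_seq K B w x = 2"
  shows "x < B \<and> w x = 2"
proof (cases rule: block_seq_position_cases[where x = x and B = B and K = K])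
  case 1
  with assms show ?thesis by (simp add: block_seq_prefix)
next
  case 2
  with assms show ?thesis by (simp add: block_seq_tail)
next
  case (3 q r)
  from assms block_seq_block_letter[OF 3] show ?thesis
    by (simp split: if_splits)
qed

lemma block_seq_eq_3D:
  assumes "block_seq K B w x = 3" and "\<forall>y<B. w y \<le> 2"
  shows "B + (K - 1) * (K + 2) \<le> x"
proof (cases rule: block_seq_position_cases[where x = x and B = B and K = K])
  case 1
  with assms show ?thesis by (auto simp: block_seq_prefix)
next
  case (3 q r)
  from assms(1) block_seq_block_letter[OF 3]
  have "(if r = 0 then q + 4 else if r = q + 2 then 1 else 0) = (3::nat)"
    by simp
  then show ?thesis
    by (simp split: if_splits)
qed

text \<open>Every window of \<open>K\<close> positions outside the prefix contains a block start, a \<open>1\<close>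
  or a tail letter.\<close>

lemma block_seq_zero_run_in_prefix:
  assumes "2 \<le> K" and zero: "\<forall>t<K. block_seq K B w (i + t) = 0"
  shows "i + K \<le> B"
proof (rule ccontr)
  assume long: "\<not> i + K \<le> B"
  have hit: "block_seq K B w (i + d) = 0" if "d < K" for d
    using zero that by blast
  show False
  proof (cases rule: block_seq_position_cases[where x = i and B = B and K = K])
    case 1
    then have "i + (B - i) = B + 0 * (K + 2) + 0" "B - i < K"
      using long by auto
    with hit[of "B - i"] show False
      using block_seq_block[of 0 K 0 B w] assms(1) by simp
  next
    case 2
    with hit[of 0] assms(1) show False
      by (simp add: block_seq_tail)
  next
    case (3 q r)
    consider (start) "r = 0" | (up_to_one) "0 < r" "r \<le> q + 2" | (after_one) "q + 2 < r"
      by linarith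
    then show False
    proof cases
      case start
      with 3 hit[of 0] assms(1) show False
        using block_seq_block_letter[OF 3, of w] by simp
    next
      case up_to_one
      then have "i + (q + 2 - r) = B + q * (K + 2) + (q + 2)" "q + 2 - r < K"
        using 3 by auto
      with hit[of "q + 2 - r"] show False
        using block_seq_block[OF 3(1), of "q + 2" B w] 3(1) by simp
    next
      case after_one
      then have "i + (K + 2 - r) = B + q * (K + 2) + (K + 2)" "K + 2 - r < K"
        using 3 by auto
      with hit[of "K + 2 - r"] show False
        using block_seq_next_block_start[OF 3(1), of B w] by simp
    qed
  qed
qed

section \<open>Lower bounds on attractors of block strings\<close>

lemma attractor_contains_block_start:
  assumes A: "is_string_attractor (block_string K B w m) G"
    and letters: "\<forall>y<B. w y \<le> 2" and q: "q < K - 1"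
  shows "B + q * (K + 2) \<in> G"
  using A unfolding block_string_def
proof (rule string_attractor_contains_unique_letter)
  show "B + q * (K + 2) < B + (K - 1) * (K + 2) + m"
    using block_position_less[OF q, of 0] by simp
  have start: "block_seq K B w (B + q * (K + 2)) = q + 4"
    using block_seq_block[OF q, of 0 B w] by simp
  fix y assume "block_seq K B w y = block_seq K B w (B + q * (K + 2))"
  with start letters show "y = B + q * (K + 2)"
    by (intro block_seq_eq_block_startD) auto
qed

lemma attractor_hits_tail:
  assumes A: "is_string_attractor (block_string K B w m) G"
    and letters: "\<forall>y<B. w y \<le> 2" and "0 < m"
  shows "G \<inter> {B + (K - 1) * (K + 2)..} \<noteq> {}"
  using A unfolding block_string_def
proof (rule string_attractor_hits_letter)
  show "B + (K - 1) * (K + 2) < B + (K - 1) * (K + 2) + m"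
    using \<open>0 < m\<close> by simp
  fix y assume "block_seq K B w y = block_seq K B w (B + (K - 1) * (K + 2))"
  then have "block_seq K B w y = 3"
    by (simp add: block_seq_tail)
  then have "B + (K - 1) * (K + 2) \<le> y"
    using letters by (rule block_seq_eq_3D)
  then show "y \<in> {B + (K - 1) * (K + 2)..}"
    by simp
qed

lemma block_interior_occurrence_unique:
  assumes ones: "\<forall>y<B. w y = 1 \<longrightarrow> y + 1 < B \<and> w (y + 1) \<noteq> 0" and q: "q < K - 1"
    and occ: "\<And>t. t \<le> K \<Longrightarrow> block_seq K B w (i + t) = (if t = q + 1 then 1 else 0)"
  shows "i = B + q * (K + 2) + 1"
proof -
  have "q + 2 \<le> K" using q by linarith
  show ?thesis
  proof (cases "i + (q + 1) < B")
    case True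
    with ones occ[of "q + 1"] have "i + (q + 2) < B" "w (i + (q + 2)) \<noteq> 0"
      using \<open>q + 2 \<le> K\<close> by (auto simp: block_seq_prefix)
    with occ[OF \<open>q + 2 \<le> K\<close>] show ?thesis
      by (simp add: block_seq_prefix)
  next
    case False
    with occ[of "q + 1"] block_seq_eq_1D[of K B w "i + (q + 1)"]
    obtain q' where q': "q' < K - 1" and one: "i + (q + 1) = B + q' * (K + 2) + (q' + 2)"
      using \<open>q + 2 \<le> K\<close> by auto
    consider "q' < q" | "q < q'" | "q' = q" by linarith
    then show ?thesis
    proof cases
      case 1
      then have "i + (q - q' - 1) = B + q' * (K + 2) + 0" "q - q' - 1 \<le> K"
        "q - q' - 1 \<noteq> q + 1"
        using one q by auto
      with occ[of "q - q' - 1"] show ?thesis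
        using block_seq_block[OF q', of 0 B w] by simp
    next
      case 2
      then have "i + (K + 1 + q - q') = B + q' * (K + 2) + (K + 2)" "K + 1 + q - q' \<le> K"
        "K + 1 + q - q' \<noteq> q + 1"
        using one q' by auto
      with occ[of "K + 1 + q - q'"] show ?thesis
        using block_seq_next_block_start[OF q', of B w] by simp
    next
      case 3
      with one show ?thesis by simp
    qed
  qed
qed

lemma attractor_hits_block_interior:
  assumes A: "is_string_attractor (block_string K B w m) G"
    and ones: "\<forall>y<B. w y = 1 \<longrightarrow> y + 1 < B \<and> w (y + 1) \<noteq> 0" and q: "q < K - 1"
  shows "G \<inter> {B + q * (K + 2)<..B + q * (K + 2) + K + 1} \<noteq> {}"
proof -
  let ?s = "B + q * (K + 2)"
  have interior: "block_seq K B w (?s + 1 + t) = (if t = q + 1 then 1 else 0)" if "t \<le> K" for t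
    using block_seq_block[OF q, of "t + 1" B w] that by (simp add: add.assoc)
  show ?thesis
    using A unfolding block_string_def
  proof (rule string_attractor_hits_occurrences[where L = "K + 1" and i = "?s + 1"])
    show "?s + 1 + (K + 1) \<le> B + (K - 1) * (K + 2) + m"
      using block_position_less[OF q, of "K + 1" B] by simp
    fix i' assume "\<forall>t<K + 1. block_seq K B w (i' + t) = block_seq K B w (?s + 1 + t)"
    then have "block_seq K B w (i' + t) = (if t = q + 1 then 1 else 0)" if "t \<le> K" for t
      using interior[OF that] that by auto
    with ones q have "i' = ?s + 1"
      by (rule block_interior_occurrence_unique)
    then show "{i'..<i' + (K + 1)} \<subseteq> {?s<..?s + K + 1}"
      by auto
  qed simp
qed

lemma attractor_hits_prefix_zero_run:
  assumes A: "is_string_attractor (block_string K B w m) G"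
    and "2 \<le> K" and "K \<le> B" and zeros: "\<forall>t<K. w t = 0"
  shows "G \<inter> {p. p < B \<and> w p = 0} \<noteq> {}"
  using A unfolding block_string_def
proof (rule string_attractor_hits_occurrences[where L = K and i = 0])
  show "0 < K" "0 + K \<le> B + (K - 1) * (K + 2) + m"
    using assms(2,3) by auto
  fix i' assume "\<forall>t<K. block_seq K B w (i' + t) = block_seq K B w (0 + t)"
  with zeros \<open>K \<le> B\<close> have run: "\<forall>t<K. block_seq K B w (i' + t) = 0"
    by (simp add: block_seq_prefix)
  then have "i' + K \<le> B"
    by (rule block_seq_zero_run_in_prefix[OF assms(2)])
  show "{i'..<i' + K} \<subseteq> {p. p < B \<and> w p = 0}"
  proof
    fix x assume "x \<in> {i'..<i' + K}"
    with run[rule_format, of "x - i'"] \<open>i' + K \<le> B\<close> show "x \<in> {p. p < B \<and> w p = 0}"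
      by (auto simp: block_seq_prefix)
  qed
qed

lemma card_Int_consecutive_intervals:
  assumes "finite G" and "\<And>q. q < Q \<Longrightarrow> k \<le> card (G \<inter> {a + q * l..<a + (q + 1) * l})"
  shows "Q * k \<le> card (G \<inter> {a..<a + Q * l})"
  using assms(2)
proof (induction Q)
  case (Suc Q)
  have "G \<inter> {a..<a + Suc Q * l} = (G \<inter> {a..<a + Q * l}) \<union> (G \<inter> {a + Q * l..<a + (Q + 1) * l})"
    by auto
  then have "card (G \<inter> {a..<a + Suc Q * l}) =
      card (G \<inter> {a..<a + Q * l}) + card (G \<inter> {a + Q * l..<a + (Q + 1) * l})"
    using assms(1) by (simp add: card_Un_disjoint disjoint_iff)
  with Suc show ?case by fastforce
qed simp

lemma card_Int_three_intervals:
  fixes G :: "nat set"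
  assumes "finite G" and "a \<le> b"
  shows "card (G \<inter> {..<a}) + card (G \<inter> {a..<b}) + card (G \<inter> {b..}) = card G"
proof -
  have "G = (G \<inter> {..<a}) \<union> (G \<inter> {a..<b}) \<union> (G \<inter> {b..})"
    using assms(2) by auto
  also have "card \<dots> = card (G \<inter> {..<a}) + card (G \<inter> {a..<b}) + card (G \<inter> {b..})"
    using assms by (simp add: card_Un_disjoint disjoint_iff)
  finally show ?thesis by simp
qed

lemma card_block_string_attractor_ge:
  assumes A: "is_string_attractor (block_string K B w m) G"
    and letters: "\<forall>y<B. w y \<le> 2" and ones: "\<forall>y<B. w y = 1 \<longrightarrow> y + 1 < B \<and> w (y + 1) \<noteq> 0"
  shows "card (G \<inter> {..<B}) + 2 * (K - 1) + of_bool (0 < m) \<le> card G"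
proof -
  let ?N = "B + (K - 1) * (K + 2)"
  have fin: "finite G"
    using A by (rule is_string_attractor_finite)
  have "2 \<le> card (G \<inter> {B + q * (K + 2)..<B + (q + 1) * (K + 2)})" if q: "q < K - 1" for q
  proof -
    obtain p where "p \<in> G" "B + q * (K + 2) < p" "p \<le> B + q * (K + 2) + K + 1"
      using attractor_hits_block_interior[OF A ones q] by auto
    with attractor_contains_block_start[OF A letters q]
    have "{B + q * (K + 2), p} \<subseteq> G \<inter> {B + q * (K + 2)..<B + (q + 1) * (K + 2)}"
      by auto
    from card_mono[OF _ this] fin \<open>B + q * (K + 2) < p\<close> show ?thesis
      by simp
  qed
  then have "(K - 1) * 2 \<le> card (G \<inter> {B..<?N})"
    by (rule card_Int_consecutive_intervals[OF fin])
  moreover have "of_bool (0 < m) \<le> card (G \<inter> {?N..})"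
  proof (cases "0 < m")
    case True
    then have "G \<inter> {?N..} \<noteq> {}"
      by (rule attractor_hits_tail[OF A letters])
    with fin True show ?thesis
      by (simp add: Suc_le_eq card_gt_0_iff)
  qed simp
  ultimately show ?thesis
    using card_Int_three_intervals[OF fin, of B ?N] by simp
qed

lemma card_prefix_attractor_ge_1:
  assumes "is_string_attractor (block_string K B w m) G"
    and "2 \<le> K" and "K \<le> B" and "\<forall>t<K. w t = 0"
  shows "1 \<le> card (G \<inter> {..<B})"
proof -
  obtain p where "p \<in> G" "p < B"
    using attractor_hits_prefix_zero_run[OF assms] by blast
  with is_string_attractor_finite[OF assms(1)] show ?thesis
    by (simp add: Suc_le_eq card_gt_0_iff) blast
qed

lemma card_prefix_attractor_ge_2:
  assumes A: "is_string_attractor (block_string K B w m) G"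
    and "2 \<le> K" and "K \<le> B" and "\<forall>t<K. w t = 0"
    and "x < B" and "w x = 2" and unique: "\<forall>y<B. w y = 2 \<longrightarrow> y = x"
  shows "2 \<le> card (G \<inter> {..<B})"
proof -
  have "x \<in> G"
    using A unfolding block_string_def
  proof (rule string_attractor_contains_unique_letter)
    show "x < B + (K - 1) * (K + 2) + m"
      using \<open>x < B\<close> by simp
    fix y assume "block_seq K B w y = block_seq K B w x"
    with \<open>x < B\<close> \<open>w x = 2\<close> have "block_seq K B w y = 2"
      by (simp add: block_seq_prefix)
    with unique show "y = x"
      using block_seq_eq_2D by blast
  qed
  moreover obtain p where "p \<in> G" "p < B" "w p = 0"
    using attractor_hits_prefix_zero_run[OF assms(1-4)] by blast
  ultimately have "{x, p} \<subseteq> G \<inter> {..<B}" and "x \<noteq> p"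
    using \<open>x < B\<close> \<open>w x = 2\<close> by auto
  with is_string_attractor_finite[OF A] show ?thesis
    using card_mono[of "G \<inter> {..<B}" "{x, p}"] by simp
qed

lemma gamma_block_string_ge:
  assumes letters: "\<forall>y<B. w y \<le> 2" and ones: "\<forall>y<B. w y = 1 \<longrightarrow> y + 1 < B \<and> w (y + 1) \<noteq> 0"
    and prefix: "\<And>G. is_string_attractor (block_string K B w m) G \<Longrightarrow> c \<le> card (G \<inter> {..<B})"
  shows "c + 2 * (K - 1) + of_bool (0 < m) \<le> gamma (block_string K B w m)"
proof (rule gamma_geI)
  fix G assume A: "is_string_attractor (block_string K B w m) G"
  with card_block_string_attractor_ge[OF A letters ones] prefix[OF A]
  show "c + 2 * (K - 1) + of_bool (0 < m) \<le> card G"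
    by linarith
qed

text \<open>\<open>base_text K m\<close> is \<open>0\<^sup>K 1 0\<^sup>K\<close> followed by the blocks and \<open>3\<^sup>m\<close>; the other three
  texts replace its \<open>1\<close> by \<open>2\<close>, insert a \<open>2\<close> after it, and delete it.\<close>

definition spike :: "nat \<Rightarrow> nat \<Rightarrow> nat \<Rightarrow> nat" where
  "spike K c x = (if x = K then c else 0)"

abbreviation base_seq :: "nat \<Rightarrow> nat \<Rightarrow> nat" where
  "base_seq K \<equiv> block_seq K (2 * K + 1) (spike K 1)"

abbreviation base_length :: "nat \<Rightarrow> nat" where
  "base_length K \<equiv> 2 * K + 1 + (K - 1) * (K + 2)"

definition base_text :: "nat \<Rightarrow> nat \<Rightarrow> nat list" where
  "base_text K m = block_string K (2 * K + 1) (spike K 1) m"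

definition substituted_text :: "nat \<Rightarrow> nat \<Rightarrow> nat list" where
  "substituted_text K m = block_string K (2 * K + 1) (spike K 2) m"

definition inserted_text :: "nat \<Rightarrow> nat \<Rightarrow> nat list" where
  "inserted_text K m = block_string K (2 * K + 2) ((spike K 1)(K + 1 := 2)) m"

definition deleted_text :: "nat \<Rightarrow> nat \<Rightarrow> nat list" where
  "deleted_text K m = block_string K (2 * K) (\<lambda>_. 0) m"

lemma length_texts:
  "length (base_text K m) = base_length K + m"
  "length (substituted_text K m) = length (base_text K m)"
  "length (inserted_text K m) = length (base_text K m) + 1"
  "length (deleted_text K m) + 1 = length (base_text K m)"
  by (simp_all add: base_text_def substituted_text_def inserted_text_def deleted_text_def
      length_block_string)

lemma ed_base_substituted_text: "ed (base_text K m) (substituted_text K m) = 1"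
  unfolding base_text_def substituted_text_def block_string_def
proof (rule ed_map_upt_substitution[where k = K])
  fix x assume "x \<noteq> K"
  then show "block_seq K (2 * K + 1) (spike K 2) x = base_seq K x"
    by (intro block_seq_prefix_cong) (simp add: spike_def)
qed (simp_all add: block_seq_prefix spike_def)

lemma ed_base_inserted_text: "ed (base_text K m) (inserted_text K m) = 1"
proof -
  let ?n = "base_length K + m"
  have "ed (map (base_seq K) [0..<?n])
      (map (block_seq K (Suc (2 * K + 1)) ((spike K 1)(K + 1 := 2))) [0..<Suc ?n]) = 1"
  proof (rule ed_map_upt_insertion[where k = "K + 1"])
    fix x assume "K + 1 \<le> x"
    show "block_seq K (Suc (2 * K + 1)) ((spike K 1)(K + 1 := 2)) (Suc x) = base_seq K x"
    proof (cases "x < 2 * K + 1")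
      case True
      with \<open>K + 1 \<le> x\<close> show ?thesis
        by (simp add: block_seq_prefix spike_def)
    next
      case False
      then show ?thesis
        by (intro block_seq_Suc_shift) simp
    qed
  qed (simp_all add: block_seq_prefix spike_def)
  then show ?thesis
    by (simp add: base_text_def inserted_text_def block_string_def)
qed

lemma ed_base_deleted_text: "ed (base_text K m) (deleted_text K m) = 1"
proof -
  let ?n = "2 * K + (K - 1) * (K + 2) + m"
  have "ed (map (block_seq K (Suc (2 * K)) (spike K 1)) [0..<Suc ?n])
      (map (block_seq K (2 * K) (\<lambda>_. 0)) [0..<?n]) = 1"
  proof (rule ed_map_upt_deletion[where k = K])
    fix x assume "K \<le> x"
    show "block_seq K (2 * K) (\<lambda>_. 0) x = block_seq K (Suc (2 * K)) (spike K 1) (Suc x)"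
    proof (cases "x < 2 * K")
      case True
      with \<open>K \<le> x\<close> show ?thesis
        by (simp add: block_seq_prefix spike_def)
    next
      case False
      then show ?thesis
        by (intro block_seq_Suc_shift[symmetric]) simp
    qed
  qed (simp_all add: block_seq_prefix spike_def)
  then show ?thesis
    by (simp add: base_text_def deleted_text_def block_string_def)
qed

lemma gamma_substituted_text_ge:
  assumes "2 \<le> K"
  shows "2 * K + of_bool (0 < m) \<le> gamma (substituted_text K m)"
proof -
  have "2 + 2 * (K - 1) + of_bool (0 < m) \<le> gamma (substituted_text K m)"
    unfolding substituted_text_def
  proof (rule gamma_block_string_ge)
    fix G assume "is_string_attractor (block_string K (2 * K + 1) (spike K 2) m) G"
    then show "2 \<le> card (G \<inter> {..<2 * K + 1})"
      by (rule card_prefix_attractor_ge_2[where x = K]) (use assms in \<open>auto simp: spike_def\<close>)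
  qed (auto simp: spike_def)
  with assms show ?thesis by simp
qed

lemma gamma_inserted_text_ge:
  assumes "2 \<le> K"
  shows "2 * K + of_bool (0 < m) \<le> gamma (inserted_text K m)"
proof -
  have "2 + 2 * (K - 1) + of_bool (0 < m) \<le> gamma (inserted_text K m)"
    unfolding inserted_text_def
  proof (rule gamma_block_string_ge)
    fix G assume "is_string_attractor (block_string K (2 * K + 2) ((spike K 1)(K + 1 := 2)) m) G"
    then show "2 \<le> card (G \<inter> {..<2 * K + 2})"
      by (rule card_prefix_attractor_ge_2[where x = "K + 1"]) (use assms in \<open>auto simp: spike_def\<close>)
  qed (auto simp: spike_def)
  with assms show ?thesis by simp
qed

lemma gamma_deleted_text_ge:
  assumes "2 \<le> K"
  shows "2 * K - 1 + of_bool (0 < m) \<le> gamma (deleted_text K m)"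
proof -
  have "1 + 2 * (K - 1) + of_bool (0 < m) \<le> gamma (deleted_text K m)"
    unfolding deleted_text_def
  proof (rule gamma_block_string_ge)
    fix G assume "is_string_attractor (block_string K (2 * K) (\<lambda>_. 0) m) G"
    then show "1 \<le> card (G \<inter> {..<2 * K})"
      by (rule card_prefix_attractor_ge_1) (use assms in auto)
  qed auto
  with assms show ?thesis by simp
qed

lemma gamma_base_text_ge:
  "K - 1 \<le> gamma (base_text K m)"
proof (rule gamma_geI)
  fix G assume A: "is_string_attractor (base_text K m) G"
  let ?start = "\<lambda>q. 2 * K + 1 + q * (K + 2)"
  have "?start ` {..<K - 1} \<subseteq> G"
    using attractor_contains_block_start[OF A[unfolded base_text_def]] by (auto simp: spike_def)
  then have "card (?start ` {..<K - 1}) \<le> card G"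
    using is_string_attractor_finite[OF A] by (rule card_mono[rotated])
  moreover have "inj_on ?start {..<K - 1}"
  proof (rule inj_onI)
    fix x y assume "?start x = ?start y"
    then have "x * (K + 2) = y * (K + 2)"
      by (simp only: add_left_cancel)
    then show "x = y"
      by (simp only: mult_cancel2) simp
  qed
  ultimately show "K - 1 \<le> card G"
    by (simp add: card_image)
qed

section \<open>An attractor of the base text\<close>

definition base_attractor :: "nat \<Rightarrow> nat \<Rightarrow> nat set" where
  "base_attractor K m = {0, K} \<union> (\<lambda>q. 2 * K + 1 + q * (K + 2)) ` {..<K - 1} \<union>
     (if 0 < m then {base_length K} else {})"

lemma card_base_attractor_le:
  assumes "0 < K"
  shows "card (base_attractor K m) \<le> K + 1 + of_bool (0 < m)"
proof -
  have "card (base_attractor K m) \<le> card {0, K} + card ((\<lambda>q. 2 * K + 1 + q * (K + 2)) ` {..<K - 1}) +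
      card (if 0 < m then {base_length K} else {})"
    unfolding base_attractor_def by (intro card_Un_le[THEN order_trans] add_right_mono card_Un_le)
  also have "\<dots> \<le> 2 + (K - 1) + of_bool (0 < m)"
    using card_image_le[of "{..<K - 1}" "\<lambda>q. 2 * K + 1 + q * (K + 2)"]
    by (intro add_mono) (auto simp: card_insert_le_m1)
  finally show ?thesis using assms by simp
qed

lemma base_attractor_subset: "base_attractor K m \<subseteq> {..<base_length K + m}"
proof
  fix x assume "x \<in> base_attractor K m"
  then consider "x = 0" | "x = K" | q where "q < K - 1" "x = 2 * K + 1 + q * (K + 2)"
    | "0 < m" "x = base_length K"
    unfolding base_attractor_def by (auto split: if_splits)
  then show "x \<in> {..<base_length K + m}"
  proof cases
    case 3
    then show ?thesis
      using block_position_less[OF 3(1), of 0 "2 * K + 1"] by simp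
  qed auto
qed

lemma base_attractor_memberI:
  "0 \<in> base_attractor K m" "K \<in> base_attractor K m"
  "q < K - 1 \<Longrightarrow> 2 * K + 1 + q * (K + 2) \<in> base_attractor K m"
  "0 < m \<Longrightarrow> base_length K \<in> base_attractor K m"
  by (auto simp: base_attractor_def)

text \<open>A window \<open>0\<^sup>d 1 0\<^sup>L\<^sup>-\<^sup>d\<^sup>-\<^sup>1\<close>, or \<open>0\<^sup>L\<close> with \<open>L \<le> K\<close> (encoded by \<open>d = K\<close>), occurs
  in the prefix \<open>0\<^sup>K 1 0\<^sup>K\<close> of the base text at a position covering \<open>0\<close> or \<open>K\<close>.\<close>

lemma base_text_prefix_occurrence:
  assumes "0 < L" and "d \<le> K" and "L \<le> K + 1 + d" and "d < L \<or> d = K"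
    and window: "\<forall>t<L. base_seq K (i + t) = (if t = d then 1 else 0)"
  shows "has_marked_occurrence (base_seq K) (base_length K + m)
    (base_attractor K m) i L"
proof -
  have "K - d + L \<le> base_length K + m"
    using assms(2,3) by simp
  moreover have "base_seq K (K - d + t) = base_seq K (i + t)"
    if "t < L" for t
    using that assms(2,3) window by (auto simp: block_seq_prefix spike_def)
  moreover have "K - d \<le> K \<and> K < K - d + L \<or> K - d \<le> 0 \<and> 0 < K - d + L"
    using assms(1,2,4) by auto
  then have "\<exists>p\<in>base_attractor K m. K - d \<le> p \<and> p < K - d + L"
    using base_attractor_memberI(1,2) by blast
  ultimately show ?thesis
    unfolding has_marked_occurrence_def by blast
qed

lemma base_text_occurrence_in_prefix:
  assumes "2 \<le> K" and "0 < L" and "i < 2 * K + 1"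
    and avoid: "\<And>p. p \<in> base_attractor K m \<Longrightarrow> i \<le> p \<Longrightarrow> i + L \<le> p"
  shows "has_marked_occurrence (base_seq K) (base_length K + m)
    (base_attractor K m) i L"
proof (rule base_text_prefix_occurrence[where d = K])
  have "0 < i"
    using avoid[OF base_attractor_memberI(1)] \<open>0 < L\<close> by (cases "i = 0") auto
  have "0 < K - 1"
    using assms(1) by simp
  have "i + L \<le> K \<or> K < i \<and> i + L \<le> 2 * K + 1"
    using avoid[OF base_attractor_memberI(2)] avoid[OF base_attractor_memberI(3)[OF \<open>0 < K - 1\<close>]]
      assms(3) by (cases "i \<le> K") auto
  with \<open>0 < i\<close> show "L \<le> K + 1 + K" "K < L \<or> K = K"
    by auto
  show "\<forall>t<L. base_seq K (i + t) = (if t = K then 1 else 0)"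
    using \<open>i + L \<le> K \<or> K < i \<and> i + L \<le> 2 * K + 1\<close> \<open>0 < i\<close>
    by (auto simp: block_seq_prefix spike_def)
qed (use assms in auto)

lemma base_text_occurrence_in_tail:
  assumes "0 < L" and "i + L \<le> base_length K + m"
    and "base_length K \<le> i"
    and avoid: "\<And>p. p \<in> base_attractor K m \<Longrightarrow> i \<le> p \<Longrightarrow> i + L \<le> p"
  shows "has_marked_occurrence (base_seq K) (base_length K + m)
    (base_attractor K m) i L"
proof -
  let ?N = "base_length K"
  have "0 < m"
    using assms(1-3) by linarith
  then have "?N < i"
    using avoid[OF base_attractor_memberI(4)] assms(1,3) by force
  show ?thesis
  proof (rule has_marked_occurrenceI[where i' = ?N and p = ?N])
    show "?N + L \<le> ?N + m"
      using \<open>?N < i\<close> assms(2) by simp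
    show "base_seq K (?N + t) = base_seq K (i + t)" for t
      using assms(3) by (simp add: block_seq_tail)
  qed (use \<open>0 < m\<close> \<open>0 < L\<close> base_attractor_memberI(4) in auto)
qed

lemma base_text_factor_in_block_end:
  assumes "i + L \<le> base_length K + m" and q: "q < K - 1" and r: "r < K + 2"
    and i: "i = 2 * K + 1 + q * (K + 2) + r"
    and avoid: "\<And>p. p \<in> base_attractor K m \<Longrightarrow> i \<le> p \<Longrightarrow> i + L \<le> p"
  shows "i + L \<le> 2 * K + 1 + q * (K + 2) + (K + 2)"
proof -
  let ?s = "2 * K + 1 + q * (K + 2)"
  have next_start: "?s + (K + 2) = 2 * K + 1 + (q + 1) * (K + 2)"
    by simp
  show ?thesis
  proof (cases "q + 1 < K - 1")
    case True
    then show ?thesis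
      unfolding next_start using avoid[OF base_attractor_memberI(3)[OF True]] i r by simp
  next
    case False
    then have "q + 1 = K - 1"
      using q by linarith
    then have N: "?s + (K + 2) = base_length K"
      unfolding next_start by (simp only:)
    show ?thesis
    proof (cases "0 < m")
      case True
      have "i \<le> base_length K"
        using i r N by linarith
      with avoid[OF base_attractor_memberI(4)[OF True]] N show ?thesis
        by simp
    next
      case False
      with assms(1) N show ?thesis
        by simp
    qed
  qed
qed

lemma base_text_occurrence_in_block:
  assumes "0 < L" and "i + L \<le> base_length K + m"
    and q: "q < K - 1" and r: "r < K + 2" and i: "i = 2 * K + 1 + q * (K + 2) + r"
    and avoid: "\<And>p. p \<in> base_attractor K m \<Longrightarrow> i \<le> p \<Longrightarrow> i + L \<le> p"
  shows "has_marked_occurrence (base_seq K) (base_length K + m) (base_attractor K m) i L"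
proof -
  let ?s = "2 * K + 1 + q * (K + 2)"
  have "0 < r"
    using avoid[OF base_attractor_memberI(3)[OF q]] i \<open>0 < L\<close> by (cases "r = 0") auto
  have "i + L \<le> ?s + (K + 2)"
    using assms(2) q r i avoid by (rule base_text_factor_in_block_end)
  have window: "base_seq K (i + t) = (if r + t = q + 2 then 1 else 0)" if "t < L" for t
  proof -
    have shift: "i + t = ?s + (r + t)" and "r + t < K + 2"
      using i that \<open>i + L \<le> ?s + (K + 2)\<close> by auto
    with block_seq_block[OF q this(2), of "2 * K + 1" "spike K 1"] \<open>0 < r\<close> show ?thesis
      unfolding shift by simp
  qed
  show ?thesis
  proof (cases "r \<le> q + 2 \<and> q + 2 < r + L")
    case True
    show ?thesis
    proof (rule base_text_prefix_occurrence[where d = "q + 2 - r"])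
      show "\<forall>t<L. base_seq K (i + t) = (if t = q + 2 - r then 1 else 0)"
        using window True by auto
    qed (use True q \<open>0 < r\<close> \<open>0 < L\<close> \<open>i + L \<le> ?s + (K + 2)\<close> i in auto)
  next
    case False
    show ?thesis
    proof (rule base_text_prefix_occurrence[where d = K])
      have "L \<le> K"
        using False q \<open>i + L \<le> ?s + (K + 2)\<close> i by auto
      then show "\<forall>t<L. base_seq K (i + t) = (if t = K then 1 else 0)"
        using window False by auto
      show "L \<le> K + 1 + K" using \<open>L \<le> K\<close> by simp
    qed (use \<open>0 < L\<close> in auto)
  qed
qed

lemma is_string_attractor_base_attractor:
  assumes "2 \<le> K"
  shows "is_string_attractor (base_text K m) (base_attractor K m)"
  unfolding base_text_def block_string_def is_string_attractor_map_upt_iff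
proof (intro conjI allI impI base_attractor_subset)
  fix i L assume iL: "0 < L \<and> i + L \<le> base_length K + m"
  show "has_marked_occurrence (base_seq K) (base_length K + m)
    (base_attractor K m) i L"
  proof (cases "\<exists>p\<in>base_attractor K m. i \<le> p \<and> p < i + L")
    case True
    with iL show ?thesis
      unfolding has_marked_occurrence_def by blast
  next
    case False
    then have avoid: "\<And>p. p \<in> base_attractor K m \<Longrightarrow> i \<le> p \<Longrightarrow> i + L \<le> p"
      by auto
    show ?thesis
    proof (cases rule: block_seq_position_cases[where x = i and B = "2 * K + 1" and K = K])
      case 1
      with assms iL avoid show ?thesis by (intro base_text_occurrence_in_prefix) auto
    next
      case 2
      with iL avoid show ?thesis by (intro base_text_occurrence_in_tail) auto
    next
      case (3 q r)
      with iL avoid show ?thesis by (intro base_text_occurrence_in_block) auto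
    qed
  qed
qed

lemma gamma_base_text_le:
  assumes "2 \<le> K"
  shows "gamma (base_text K m) \<le> K + 1 + of_bool (0 < m)"
proof -
  have "gamma (base_text K m) \<le> card (base_attractor K m)"
    by (rule gamma_le_card[OF is_string_attractor_base_attractor[OF assms]])
  also have "\<dots> \<le> K + 1 + of_bool (0 < m)"
    using assms by (intro card_base_attractor_le) simp
  finally show ?thesis .
qed

section \<open>Sensitivity\<close>

text \<open>\<open>Sup\<close> of an unbounded set of reals is unspecified; the hypothesis \<open>C T \<le> length T\<close>
  below bounds the sets defining \<open>MS\<close> and \<open>AS\<close>.\<close>

lemma le_Sup_of_bounded:
  fixes f :: "'a \<Rightarrow> 'b \<Rightarrow> real"
  assumes "P x y" and "\<And>x y. P x y \<Longrightarrow> f x y \<le> b"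
  shows "f x y \<le> Sup {f x y | x y. P x y}"
  by (rule cSup_upper) (use assms in \<open>auto intro!: bdd_aboveI[where M = b]\<close>)

lemma real_div_le_of_le:
  assumes "a \<le> k"
  shows "real a / real b \<le> real k"
proof (cases "b = 0")
  case False
  then have "real a / real b \<le> real k / 1"
    using assms by (intro frac_le) auto
  then show ?thesis by simp
qed simp

lemma MS_sub_ge:
  assumes "\<And>T. C T \<le> length T" and "length T = n" "length T' = n" "ed T T' = 1"
  shows "real (C T') / real (C T) \<le> MS_sub C n"
  unfolding MS_sub_def
proof (rule le_Sup_of_bounded[where f = "\<lambda>T T'. real (C T') / real (C T)"
      and P = "\<lambda>T T'. length T = n \<and> length T' = n \<and> ed T T' = 1" and b = "real n"])
  show "length T = n \<and> length T' = n \<and> ed T T' = 1"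
    using assms(2-4) by simp
  fix x y :: "'a list" assume "length x = n \<and> length y = n \<and> ed x y = 1"
  with assms(1)[of y] show "real (C y) / real (C x) \<le> real n"
    by (intro real_div_le_of_le) simp
qed

lemma MS_ins_ge:
  assumes "\<And>T. C T \<le> length T" and "length T = n" "length T' = n + 1" "ed T T' = 1"
  shows "real (C T') / real (C T) \<le> MS_ins C n"
  unfolding MS_ins_def
proof (rule le_Sup_of_bounded[where f = "\<lambda>T T'. real (C T') / real (C T)"
      and P = "\<lambda>T T'. length T = n \<and> length T' = n + 1 \<and> ed T T' = 1" and b = "real (n + 1)"])
  show "length T = n \<and> length T' = n + 1 \<and> ed T T' = 1"
    using assms(2-4) by simp
  fix x y :: "'a list" assume "length x = n \<and> length y = n + 1 \<and> ed x y = 1"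
  with assms(1)[of y] show "real (C y) / real (C x) \<le> real (n + 1)"
    by (intro real_div_le_of_le) simp
qed

lemma MS_del_ge:
  assumes "\<And>T. C T \<le> length T" and "length T = n" "length T' + 1 = n" "ed T T' = 1"
  shows "real (C T') / real (C T) \<le> MS_del C n"
  unfolding MS_del_def
proof (rule le_Sup_of_bounded[where f = "\<lambda>T T'. real (C T') / real (C T)"
      and P = "\<lambda>T T'. length T = n \<and> length T' + 1 = n \<and> ed T T' = 1" and b = "real n"])
  show "length T = n \<and> length T' + 1 = n \<and> ed T T' = 1"
    using assms(2-4) by simp
  fix x y :: "'a list" assume "length x = n \<and> length y + 1 = n \<and> ed x y = 1"
  with assms(1)[of y] show "real (C y) / real (C x) \<le> real n"
    by (intro real_div_le_of_le) simp
qed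

lemma AS_sub_ge:
  assumes "\<And>T. C T \<le> length T" and "length T = n" "length T' = n" "ed T T' = 1"
  shows "real (C T') - real (C T) \<le> AS_sub C n"
  unfolding AS_sub_def
proof (rule le_Sup_of_bounded[where f = "\<lambda>T T'. real (C T') - real (C T)"
      and P = "\<lambda>T T'. length T = n \<and> length T' = n \<and> ed T T' = 1" and b = "real n"])
  show "length T = n \<and> length T' = n \<and> ed T T' = 1"
    using assms(2-4) by simp
  fix x y :: "'a list" assume "length x = n \<and> length y = n \<and> ed x y = 1"
  with assms(1)[of y] show "real (C y) - real (C x) \<le> real n"
    by simp
qed

lemma AS_ins_ge:
  assumes "\<And>T. C T \<le> length T" and "length T = n" "length T' = n + 1" "ed T T' = 1"
  shows "real (C T') - real (C T) \<le> AS_ins C n"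
  unfolding AS_ins_def
proof (rule le_Sup_of_bounded[where f = "\<lambda>T T'. real (C T') - real (C T)"
      and P = "\<lambda>T T'. length T = n \<and> length T' = n + 1 \<and> ed T T' = 1" and b = "real (n + 1)"])
  show "length T = n \<and> length T' = n + 1 \<and> ed T T' = 1"
    using assms(2-4) by simp
  fix x y :: "'a list" assume "length x = n \<and> length y = n + 1 \<and> ed x y = 1"
  with assms(1)[of y] show "real (C y) - real (C x) \<le> real (n + 1)"
    by simp
qed

lemma AS_del_ge:
  assumes "\<And>T. C T \<le> length T" and "length T = n" "length T' + 1 = n" "ed T T' = 1"
  shows "real (C T') - real (C T) \<le> AS_del C n"
  unfolding AS_del_def
proof (rule le_Sup_of_bounded[where f = "\<lambda>T T'. real (C T') - real (C T)"
      and P = "\<lambda>T T'. length T = n \<and> length T' + 1 = n \<and> ed T T' = 1" and b = "real n"])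
  show "length T = n \<and> length T' + 1 = n \<and> ed T T' = 1"
    using assms(2-4) by simp
  fix x y :: "'a list" assume "length x = n \<and> length y + 1 = n \<and> ed x y = 1"
  with assms(1)[of y] show "real (C y) - real (C x) \<le> real n"
    by simp
qed

lemma gamma_texts_at_length:
  assumes "2 \<le> K" and "base_length K < n"
  defines "m \<equiv> n - base_length K"
  shows "length (base_text K m) = n"
    and "0 < gamma (base_text K m)" and "gamma (base_text K m) \<le> K + 2"
    and "2 * K \<le> gamma (substituted_text K m)" and "2 * K \<le> gamma (inserted_text K m)"
    and "2 * K \<le> gamma (deleted_text K m)"
proof -
  have "0 < m"
    using assms(2) by (simp add: m_def)
  then show "length (base_text K m) = n" and "gamma (base_text K m) \<le> K + 2"
    and "2 * K \<le> gamma (substituted_text K m)" and "2 * K \<le> gamma (inserted_text K m)"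
    and "2 * K \<le> gamma (deleted_text K m)"
    using assms(1,2) gamma_base_text_le[OF assms(1), of m] gamma_substituted_text_ge[OF assms(1), of m]
      gamma_inserted_text_ge[OF assms(1), of m] gamma_deleted_text_ge[OF assms(1), of m]
    by (simp_all add: length_texts m_def)
  show "0 < gamma (base_text K m)"
    using gamma_base_text_ge[of K m] assms(1) by linarith
qed

lemma sensitivity_of_gamma_ge:
  assumes "2 \<le> K" and "base_length K < n"
  shows "real (2 * K) / real (K + 2) \<le> MS_sub (gamma :: nat list \<Rightarrow> nat) n"
    and "real (2 * K) / real (K + 2) \<le> MS_ins (gamma :: nat list \<Rightarrow> nat) n"
    and "real (2 * K) / real (K + 2) \<le> MS_del (gamma :: nat list \<Rightarrow> nat) n"
    and "real K - 2 \<le> AS_sub (gamma :: nat list \<Rightarrow> nat) n"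
    and "real K - 2 \<le> AS_ins (gamma :: nat list \<Rightarrow> nat) n"
    and "real K - 2 \<le> AS_del (gamma :: nat list \<Rightarrow> nat) n"
proof -
  define m where "m = n - base_length K"
  note bounds = gamma_texts_at_length[OF assms, folded m_def]
  have ratio: "real (2 * K) / real (K + 2) \<le> real (gamma T') / real (gamma (base_text K m))"
    if "2 * K \<le> gamma T'" for T' :: "nat list"
    using that bounds(2,3) by (intro frac_le) auto
  have difference: "real K - 2 \<le> real (gamma T') - real (gamma (base_text K m))"
    if "2 * K \<le> gamma T'" for T' :: "nat list"
    using that bounds(3) by linarith
  have lengths: "length (substituted_text K m) = n" "length (inserted_text K m) = n + 1"
      "length (deleted_text K m) + 1 = n"
    using bounds(1) length_texts(2-4)[of K m] by simp_all
  show "real (2 * K) / real (K + 2) \<le> MS_sub (gamma :: nat list \<Rightarrow> nat) n"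
    using ratio[OF bounds(4)] MS_sub_ge[OF gamma_le_length bounds(1) lengths(1) ed_base_substituted_text]
    by (rule order_trans)
  show "real (2 * K) / real (K + 2) \<le> MS_ins (gamma :: nat list \<Rightarrow> nat) n"
    using ratio[OF bounds(5)] MS_ins_ge[OF gamma_le_length bounds(1) lengths(2) ed_base_inserted_text]
    by (rule order_trans)
  show "real (2 * K) / real (K + 2) \<le> MS_del (gamma :: nat list \<Rightarrow> nat) n"
    using ratio[OF bounds(6)] MS_del_ge[OF gamma_le_length bounds(1) lengths(3) ed_base_deleted_text]
    by (rule order_trans)
  show "real K - 2 \<le> AS_sub (gamma :: nat list \<Rightarrow> nat) n"
    using difference[OF bounds(4)] AS_sub_ge[OF gamma_le_length bounds(1) lengths(1) ed_base_substituted_text]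
    by (rule order_trans)
  show "real K - 2 \<le> AS_ins (gamma :: nat list \<Rightarrow> nat) n"
    using difference[OF bounds(5)] AS_ins_ge[OF gamma_le_length bounds(1) lengths(2) ed_base_inserted_text]
    by (rule order_trans)
  show "real K - 2 \<le> AS_del (gamma :: nat list \<Rightarrow> nat) n"
    using difference[OF bounds(6)] AS_del_ge[OF gamma_le_length bounds(1) lengths(3) ed_base_deleted_text]
    by (rule order_trans)
qed

lemma ereal_le_liminf_of_lower_bounds:
  fixes f a :: "nat \<Rightarrow> real"
  assumes "a \<longlonglongrightarrow> c" and "\<And>K. M \<le> K \<Longrightarrow> \<forall>\<^sub>F n in sequentially. a K \<le> f n"
  shows "ereal c \<le> liminf (\<lambda>n. ereal (f n))"
  using tendsto_ereal[OF assms(1)]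
proof (rule Lim_bounded[where M = M], intro allI impI Liminf_bounded)
  fix K assume "M \<le> K"
  with assms(2) show "\<forall>\<^sub>F n in sequentially. ereal (a K) \<le> ereal (f n)"
    by simp
qed

lemma tendsto_two_K_over_K_plus_2: "(\<lambda>K. real (2 * K) / real (K + 2)) \<longlonglongrightarrow> 2"
proof -
  have "(\<lambda>K. 2 - 4 / real (K + 2)) \<longlonglongrightarrow> 2 - 0"
    by (intro tendsto_diff tendsto_const LIMSEQ_ignore_initial_segment[OF lim_const_over_n])
  moreover have "2 - 4 / real (K + 2) = real (2 * K) / real (K + 2)" for K
    by (simp add: field_simps)
  ultimately show ?thesis by simp
qed

lemma liminf_MS_gamma_ge_2:
  shows "2 \<le> liminf (\<lambda>n. ereal (MS_sub (gamma :: nat list \<Rightarrow> nat) n))"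
    and "2 \<le> liminf (\<lambda>n. ereal (MS_ins (gamma :: nat list \<Rightarrow> nat) n))"
    and "2 \<le> liminf (\<lambda>n. ereal (MS_del (gamma :: nat list \<Rightarrow> nat) n))"
proof -
  have liminf_ge: "2 \<le> liminf (\<lambda>n. ereal (f n))"
    if bound: "\<And>K n. 2 \<le> K \<Longrightarrow> base_length K < n \<Longrightarrow> real (2 * K) / real (K + 2) \<le> f n"
    for f :: "nat \<Rightarrow> real"
  proof -
    have "ereal 2 \<le> liminf (\<lambda>n. ereal (f n))"
    proof (rule ereal_le_liminf_of_lower_bounds[OF tendsto_two_K_over_K_plus_2, where M = 2])
      fix K :: nat assume "2 \<le> K"
      show "\<forall>\<^sub>F n in sequentially. real (2 * K) / real (K + 2) \<le> f n"
        using eventually_gt_at_top by (rule eventually_mono) (rule bound[OF \<open>2 \<le> K\<close>])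
    qed
    then show ?thesis by simp
  qed
  show "2 \<le> liminf (\<lambda>n. ereal (MS_sub (gamma :: nat list \<Rightarrow> nat) n))"
    by (rule liminf_ge) (rule sensitivity_of_gamma_ge(1))
  show "2 \<le> liminf (\<lambda>n. ereal (MS_ins (gamma :: nat list \<Rightarrow> nat) n))"
    by (rule liminf_ge) (rule sensitivity_of_gamma_ge(2))
  show "2 \<le> liminf (\<lambda>n. ereal (MS_del (gamma :: nat list \<Rightarrow> nat) n))"
    by (rule liminf_ge) (rule sensitivity_of_gamma_ge(3))
qed

lemma block_count_for_length:
  assumes "100 \<le> n"
  obtains K where "2 \<le> K" and "base_length K < n" and "sqrt (real n) / 2 \<le> real K - 2"
proof -
  define s where "s = nat \<lfloor>sqrt (real n)\<rfloor>"
  have "10 \<le> sqrt (real n)"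
    using real_sqrt_le_mono[of 100 "real n"] assms by simp
  then have s: "real s \<le> sqrt (real n)" "sqrt (real n) < real s + 1" "10 \<le> s"
    unfolding s_def by linarith+
  have "real (s * s) \<le> real n"
    using mult_mono[OF s(1) s(1)] by simp
  then have "s * s \<le> n"
    by linarith
  moreover define j where "j = s - 3"
  then have "s = j + 3"
    using \<open>10 \<le> s\<close> by simp
  then have "base_length (s - 2) < s * s"
    by (simp add: algebra_simps)
  ultimately show ?thesis
    using that[of "s - 2"] s \<open>10 \<le> sqrt (real n)\<close> by simp
qed

lemma AS_gamma_Omega_sqrt:
  shows "\<exists>c>0. \<forall>\<^sub>F n in sequentially. AS_sub (gamma :: nat list \<Rightarrow> nat) n \<ge> c * sqrt (real n)"
    and "\<exists>c>0. \<forall>\<^sub>F n in sequentially. AS_ins (gamma :: nat list \<Rightarrow> nat) n \<ge> c * sqrt (real n)"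
    and "\<exists>c>0. \<forall>\<^sub>F n in sequentially. AS_del (gamma :: nat list \<Rightarrow> nat) n \<ge> c * sqrt (real n)"
proof -
  have bound: "sqrt (real n) / 2 \<le> AS_sub (gamma :: nat list \<Rightarrow> nat) n \<and>
      sqrt (real n) / 2 \<le> AS_ins (gamma :: nat list \<Rightarrow> nat) n \<and>
      sqrt (real n) / 2 \<le> AS_del (gamma :: nat list \<Rightarrow> nat) n" if long: "100 \<le> n" for n
  proof -
    obtain K where "2 \<le> K" "base_length K < n" "sqrt (real n) / 2 \<le> real K - 2"
      by (rule block_count_for_length[OF long])
    with sensitivity_of_gamma_ge(4-6)[of K n] show ?thesis
      by linarith
  qed
  have "\<forall>\<^sub>F n in sequentially. (100::nat) \<le> n"
    by (rule eventually_ge_at_top)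
  then have "\<forall>\<^sub>F n in sequentially. sqrt (real n) / 2 \<le> AS_sub (gamma :: nat list \<Rightarrow> nat) n \<and>
      sqrt (real n) / 2 \<le> AS_ins (gamma :: nat list \<Rightarrow> nat) n \<and>
      sqrt (real n) / 2 \<le> AS_del (gamma :: nat list \<Rightarrow> nat) n"
    by (rule eventually_mono) (rule bound)
  then show "\<exists>c>0. \<forall>\<^sub>F n in sequentially. AS_sub (gamma :: nat list \<Rightarrow> nat) n \<ge> c * sqrt (real n)"
    and "\<exists>c>0. \<forall>\<^sub>F n in sequentially. AS_ins (gamma :: nat list \<Rightarrow> nat) n \<ge> c * sqrt (real n)"
    and "\<exists>c>0. \<forall>\<^sub>F n in sequentially. AS_del (gamma :: nat list \<Rightarrow> nat) n \<ge> c * sqrt (real n)"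
    by (auto intro!: exI[of _ "1 / 2"] elim: eventually_mono)
qed

lemma gamma_jump_witnesses:
  fixes m :: nat
  defines "T \<equiv> base_text (m + 2) 0"
  shows "m \<le> gamma T"
    and "int (gamma T) - 2 \<le> int (gamma (substituted_text (m + 2) 0)) - int (gamma T)"
    and "int (gamma T) - 2 \<le> int (gamma (inserted_text (m + 2) 0)) - int (gamma T)"
    and "int (gamma T) - 3 \<le> int (gamma (deleted_text (m + 2) 0)) - int (gamma T)"
proof -
  have K: "2 \<le> m + 2"
    by simp
  show "m \<le> gamma T"
    using gamma_base_text_ge[of "m + 2" 0] unfolding T_def by simp
  have "int (gamma T) \<le> int m + 3"
    using gamma_base_text_le[OF K, of 0] unfolding T_def by simp
  moreover have "2 * int m + 4 \<le> int (gamma (substituted_text (m + 2) 0))"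
    and "2 * int m + 4 \<le> int (gamma (inserted_text (m + 2) 0))"
    and "2 * int m + 3 \<le> int (gamma (deleted_text (m + 2) 0))"
    using gamma_substituted_text_ge[OF K, of 0] gamma_inserted_text_ge[OF K, of 0]
      gamma_deleted_text_ge[OF K, of 0]
    by simp_all
  ultimately show "int (gamma T) - 2 \<le> int (gamma (substituted_text (m + 2) 0)) - int (gamma T)"
    and "int (gamma T) - 2 \<le> int (gamma (inserted_text (m + 2) 0)) - int (gamma T)"
    and "int (gamma T) - 3 \<le> int (gamma (deleted_text (m + 2) 0)) - int (gamma T)"
    by linarith+
qed

theorem mainTheorem3:
  shows
  "liminf (\<lambda>n. (ereal :: real \<Rightarrow> ereal) (MS_sub (gamma :: nat list \<Rightarrow> nat) n)) \<ge> 2 \<and>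
   (\<forall>m. \<exists>T T' :: nat list. gamma T \<ge> m \<and> length T' = length T \<and> ed T T' = 1 \<and>
        int (gamma T') - int (gamma T) \<ge> int (gamma T) - 2) \<and>
   (\<exists>c>0. \<forall>\<^sub>F n in sequentially. AS_sub (gamma :: nat list \<Rightarrow> nat) n \<ge> c * sqrt (real n)) \<and>
   liminf (\<lambda>n. (ereal :: real \<Rightarrow> ereal) (MS_ins (gamma :: nat list \<Rightarrow> nat) n)) \<ge> 2 \<and>
   (\<forall>m. \<exists>T T' :: nat list. gamma T \<ge> m \<and> length T' = length T + 1 \<and> ed T T' = 1 \<and>
        int (gamma T') - int (gamma T) \<ge> int (gamma T) - 2) \<and>
   (\<exists>c>0. \<forall>\<^sub>F n in sequentially. AS_ins (gamma :: nat list \<Rightarrow> nat) n \<ge> c * sqrt (real n)) \<and>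
   liminf (\<lambda>n. (ereal :: real \<Rightarrow> ereal) (MS_del (gamma :: nat list \<Rightarrow> nat) n)) \<ge> 2 \<and>
   (\<forall>m. \<exists>T T' :: nat list. gamma T \<ge> m \<and> length T' + 1 = length T \<and> ed T T' = 1 \<and>
        int (gamma T') - int (gamma T) \<ge> int (gamma T) - 3) \<and>
   (\<exists>c>0. \<forall>\<^sub>F n in sequentially. AS_del (gamma :: nat list \<Rightarrow> nat) n \<ge> c * sqrt (real n))"
proof -
  have "\<forall>m. \<exists>T T' :: nat list. gamma T \<ge> m \<and> length T' = length T \<and> ed T T' = 1 \<and>
      int (gamma T') - int (gamma T) \<ge> int (gamma T) - 2"
    using gamma_jump_witnesses(1,2) length_texts(2) ed_base_substituted_text by blast
  moreover have "\<forall>m. \<exists>T T' :: nat list. gamma T \<ge> m \<and> length T' = length T + 1 \<and> ed T T' = 1 \<and>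
      int (gamma T') - int (gamma T) \<ge> int (gamma T) - 2"
    using gamma_jump_witnesses(1,3) length_texts(3) ed_base_inserted_text by blast
  moreover have "\<forall>m. \<exists>T T' :: nat list. gamma T \<ge> m \<and> length T' + 1 = length T \<and> ed T T' = 1 \<and>
      int (gamma T') - int (gamma T) \<ge> int (gamma T) - 3"
    using gamma_jump_witnesses(1,4) length_texts(4) ed_base_deleted_text by blast
  ultimately show ?thesis
    using liminf_MS_gamma_ge_2 AS_gamma_Omega_sqrt by blast
qed

end
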